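(* Let $(X,d,\ll,\le,\tau)$ be a distinguishing Lorentzian length space. If $\tau:X\times X\to[0,\infty]$ is continuous, then $(X,d,\ll,\le,\tau)$ is causally continuous.
   Context: A causal space $(X,\ll,\le)$ is a set $X$ with two transitive relations $\ll,\le$ such that $\le$ is reflexive and $x\ll y\Rightarrow x\le y$; write $p<q$ if $p\le q$ and $p\neq q$. Set $I^+(x)=\{y: x\ll y\}$, $I^-(x)=\{y: y\ll x\}$, $J^+(x)=\{y:x\le y\}$, $J^-(x)=\{y:y\le x\}$. A Lorentzian pre-length space $(X,d,\ll,\le,\tau)$ is a causal space together with a metric $d$ on $X$ and a function $\tau:X\times X\to[0,\infty]$ that is lower semicontinuous with respect to the topology of $d$, satisfies $\tau(x,z)\ge\tau(x,y)+\tau(y,z)$ whenever $x\le y\le z$, $\tau(x,y)=0$ if $x\not\le y$, and $\tau(x,y)>0\iff x\ll y$. All topological notions refer to the metric topology of $d$. A future directed causal (resp. timelike) curve is a non-constant Lipschitz map $\gamma:I\to X$ ($I\subset\mathbb R$ an interval) with $\gamma(s)\le\gamma(t)$ (resp. $\gamma(s)\ll\gamma(t)$) for all $s<t$. For a future directed causal $\gamma:[a,b]\to X$, $L_\tau(\gamma)=\inf\sum_{i=0}^{N-1}\tau(\gamma(t_i),\gamma(t_{i+1}))$ over all partitions $a=t_0<\dots<t_N=b$. The space is causally path connected if whenever $x\le y$ (resp. $x\ll y$) there is a future directed causal (resp. timelike) curve from $x$ to $y$. For open $U\subset X$, $p\le_U q$ means there is a future directed causal curve from $p$ to $q$ with image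 in $U$. A neighborhood $U$ is causally closed if whenever $p_n\le_U q_n$ with $p_n\to p\in U$, $q_n\to q\in U$, then $p\le_U q$; the space is locally causally closed if every point has a causally closed neighborhood. The space is localizable if every $x$ has a neighborhood $\Omega_x$ such that: (i) all causal curves contained in $\Omega_x$ have uniformly bounded $d$-length; (ii) there is a continuous $\omega_x:\Omega_x\times\Omega_x\to[0,\infty)$ such that $(\Omega_x,d|_{\Omega_x\times\Omega_x},\ll|_{\Omega_x},\le|_{\Omega_x},\omega_x)$ is a Lorentzian pre-length space, and $I^\pm(y)\cap\Omega_x\ne\emptyset$ for every $y\in\Omega_x$; (iii) for all $p,q\in\Omega_x$ with $p<q$ there is a future causal curve $\gamma_{p,q}$ from $p$ to $q$ with $L_\tau(\gamma_{p,q})\ge L_\tau(\gamma)$ for every future causal curve $\gamma\subset\Omega_x$ from $p$ to $q$, and $L_\tau(\gamma_{p,q})=\omega_x(p,q)$. A Lorentzian length space is a causally path connected, locally causally closed, localizable Lorentzian pre-length space with $\tau(x,y)=\sup\{L_\tau(\gamma):\gamma$ a future causal curve from $x$ to $y\}$. Causality notions: distinguishing: $I^+(x)=I^+(y)\Rightarrow x=y$ and $I^-(x)=I^-(y)\Rightarrow x=y$. Reflective: $I^+(x)\subset I^+(y)\Rightarrow I^-(y)\subset I^-(x)$ and $I^-(y)\subset I^-(x)\Rightarrow I^+(x)\subset I^+(y)$ for all $x,y$. Causally continuous: distinguishing and reflective. *)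

theory Defs
  imports "HOL-Analysis.Analysis" "HOL-Library.Extended_Nonnegative_Real"
begin

text \<open>The space X is the whole carrier of a type 'a of class metric_space (metric d = dist).\<close>

definition causal_space_on :: "'a set \<Rightarrow> ('a \<Rightarrow> 'a \<Rightarrow> bool) \<Rightarrow> ('a \<Rightarrow> 'a \<Rightarrow> bool) \<Rightarrow> bool" where
  "causal_space_on S ll le \<longleftrightarrow>
     (\<forall>x\<in>S. \<forall>y\<in>S. \<forall>z\<in>S. ll x y \<and> ll y z \<longrightarrow> ll x z) \<and>
     (\<forall>x\<in>S. \<forall>y\<in>S. \<forall>z\<in>S. le x y \<and> le y z \<longrightarrow> le x z) \<and>
     (\<forall>x\<in>S. le x x) \<and>
     (\<forall>x\<in>S. \<forall>y\<in>S. ll x y \<longrightarrow> le x y)"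

definition lsc_on :: "'b::topological_space set \<Rightarrow> ('b \<Rightarrow> ennreal) \<Rightarrow> bool" where
  "lsc_on S f \<longleftrightarrow> (\<forall>z\<in>S. \<forall>c. c < f z \<longrightarrow> (\<exists>U. open U \<and> z \<in> U \<and> (\<forall>w\<in>U \<inter> S. c < f w)))"

definition lpls_on :: "'a::metric_space set \<Rightarrow> ('a \<Rightarrow> 'a \<Rightarrow> bool) \<Rightarrow> ('a \<Rightarrow> 'a \<Rightarrow> bool)
    \<Rightarrow> ('a \<Rightarrow> 'a \<Rightarrow> ennreal) \<Rightarrow> bool" where
  "lpls_on S ll le \<tau> \<longleftrightarrow>
     causal_space_on S ll le \<and>
     lsc_on (S \<times> S) (\<lambda>(x, y). \<tau> x y) \<and>
     (\<forall>x\<in>S. \<forall>y\<in>S. \<forall>z\<in>S. le x y \<and> le y z \<longrightarrow> \<tau> x z \<ge> \<tau> x y + \<tau> y z) \<and>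
     (\<forall>x\<in>S. \<forall>y\<in>S. \<not> le x y \<longrightarrow> \<tau> x y = 0) \<and>
     (\<forall>x\<in>S. \<forall>y\<in>S. \<tau> x y > 0 \<longleftrightarrow> ll x y)"

text \<open>Future directed curves w.r.t. a relation R (R = le: causal, R = ll: timelike),
  parametrised on a compact interval [a,b], a < b.\<close>
definition fd_curve :: "('a::metric_space \<Rightarrow> 'a \<Rightarrow> bool) \<Rightarrow> real \<Rightarrow> real \<Rightarrow> (real \<Rightarrow> 'a) \<Rightarrow> bool" where
  "fd_curve R a b \<gamma> \<longleftrightarrow> a < b \<and> (\<exists>C. C-lipschitz_on {a..b} \<gamma>) \<and>
     (\<exists>s\<in>{a..b}. \<exists>t\<in>{a..b}. \<gamma> s \<noteq> \<gamma> t) \<and>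
     (\<forall>s\<in>{a..b}. \<forall>t\<in>{a..b}. s < t \<longrightarrow> R (\<gamma> s) (\<gamma> t))"

definition is_partition :: "real \<Rightarrow> real \<Rightarrow> (nat \<Rightarrow> real) \<Rightarrow> nat \<Rightarrow> bool" where
  "is_partition a b t N \<longleftrightarrow> 0 < N \<and> t 0 = a \<and> t N = b \<and> (\<forall>i<N. t i < t (Suc i))"

definition L_tau :: "('a \<Rightarrow> 'a \<Rightarrow> ennreal) \<Rightarrow> (real \<Rightarrow> 'a) \<Rightarrow> real \<Rightarrow> real \<Rightarrow> ennreal" where
  "L_tau \<tau> \<gamma> a b = Inf {(\<Sum>i<N. \<tau> (\<gamma> (t i)) (\<gamma> (t (Suc i)))) | t N. is_partition a b t N}"

definition d_length :: "(real \<Rightarrow> 'a::metric_space) \<Rightarrow> real \<Rightarrow> real \<Rightarrow> ennreal" where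
  "d_length \<gamma> a b = Sup {(\<Sum>i<N. ennreal (dist (\<gamma> (t i)) (\<gamma> (t (Suc i))))) | t N. is_partition a b t N}"

definition causally_path_connected :: "('a::metric_space \<Rightarrow> 'a \<Rightarrow> bool) \<Rightarrow> ('a \<Rightarrow> 'a \<Rightarrow> bool) \<Rightarrow> bool" where
  "causally_path_connected ll le \<longleftrightarrow>
     (\<forall>x y. le x y \<and> x \<noteq> y \<longrightarrow> (\<exists>a b \<gamma>. fd_curve le a b \<gamma> \<and> \<gamma> a = x \<and> \<gamma> b = y)) \<and>
     (\<forall>x y. ll x y \<longrightarrow> (\<exists>a b \<gamma>. fd_curve ll a b \<gamma> \<and> \<gamma> a = x \<and> \<gamma> b = y))"

text \<open>p \<le>_U q (taken reflexive, like \<le>).\<close>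
definition le_in :: "'a::metric_space set \<Rightarrow> ('a \<Rightarrow> 'a \<Rightarrow> bool) \<Rightarrow> 'a \<Rightarrow> 'a \<Rightarrow> bool" where
  "le_in U le p q \<longleftrightarrow> p = q \<or> (\<exists>a b \<gamma>. fd_curve le a b \<gamma> \<and> \<gamma> a = p \<and> \<gamma> b = q \<and> \<gamma> ` {a..b} \<subseteq> U)"

definition causally_closed :: "('a::metric_space \<Rightarrow> 'a \<Rightarrow> bool) \<Rightarrow> 'a set \<Rightarrow> bool" where
  "causally_closed le U \<longleftrightarrow>
     (\<forall>p q P Q. (\<forall>n. le_in U le (p n) (q n)) \<and> p \<longlonglongrightarrow> P \<and> q \<longlonglongrightarrow> Q \<and> P \<in> U \<and> Q \<in> U
        \<longrightarrow> le_in U le P Q)"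

definition locally_causally_closed :: "('a::metric_space \<Rightarrow> 'a \<Rightarrow> bool) \<Rightarrow> bool" where
  "locally_causally_closed le \<longleftrightarrow> (\<forall>x. \<exists>U. open U \<and> x \<in> U \<and> causally_closed le U)"

definition localizable :: "('a::metric_space \<Rightarrow> 'a \<Rightarrow> bool) \<Rightarrow> ('a \<Rightarrow> 'a \<Rightarrow> bool)
    \<Rightarrow> ('a \<Rightarrow> 'a \<Rightarrow> ennreal) \<Rightarrow> bool" where
  "localizable ll le \<tau> \<longleftrightarrow>
    (\<forall>x. \<exists>\<Omega>. open \<Omega> \<and> x \<in> \<Omega> \<and>
       (\<exists>C::real. \<forall>a b \<gamma>. fd_curve le a b \<gamma> \<and> \<gamma> ` {a..b} \<subseteq> \<Omega> \<longrightarrow> d_length \<gamma> a b \<le> ennreal C) \<and>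
       (\<exists>\<omega>::'a \<Rightarrow> 'a \<Rightarrow> real.
          continuous_on (\<Omega> \<times> \<Omega>) (\<lambda>(p, q). \<omega> p q) \<and>
          (\<forall>p\<in>\<Omega>. \<forall>q\<in>\<Omega>. 0 \<le> \<omega> p q) \<and>
          lpls_on \<Omega> ll le (\<lambda>p q. ennreal (\<omega> p q)) \<and>
          (\<forall>y\<in>\<Omega>. (\<exists>z\<in>\<Omega>. ll y z) \<and> (\<exists>z\<in>\<Omega>. ll z y)) \<and>
          (\<forall>p\<in>\<Omega>. \<forall>q\<in>\<Omega>. le p q \<and> p \<noteq> q \<longrightarrow>
             (\<exists>a b \<gamma>. fd_curve le a b \<gamma> \<and> \<gamma> a = p \<and> \<gamma> b = q \<and>
                (\<forall>a' b' \<gamma>'. fd_curve le a' b' \<gamma>' \<and> \<gamma>' a' = p \<and> \<gamma>' b' = q \<and> \<gamma>' ` {a'..b'} \<subseteq> \<Omega>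
                    \<longrightarrow> L_tau \<tau> \<gamma>' a' b' \<le> L_tau \<tau> \<gamma> a b) \<and>
                L_tau \<tau> \<gamma> a b = ennreal (\<omega> p q)))))"

definition lorentzian_length_space :: "('a::metric_space \<Rightarrow> 'a \<Rightarrow> bool) \<Rightarrow> ('a \<Rightarrow> 'a \<Rightarrow> bool)
    \<Rightarrow> ('a \<Rightarrow> 'a \<Rightarrow> ennreal) \<Rightarrow> bool" where
  "lorentzian_length_space ll le \<tau> \<longleftrightarrow>
     lpls_on UNIV ll le \<tau> \<and> causally_path_connected ll le \<and> locally_causally_closed le \<and>
     localizable ll le \<tau> \<and>
     (\<forall>x y. \<tau> x y = Sup {L_tau \<tau> \<gamma> a b | a b \<gamma>. fd_curve le a b \<gamma> \<and> \<gamma> a = x \<and> \<gamma> b = y})"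

definition I_future :: "('a \<Rightarrow> 'a \<Rightarrow> bool) \<Rightarrow> 'a \<Rightarrow> 'a set" where
  "I_future ll x = {y. ll x y}"

definition I_past :: "('a \<Rightarrow> 'a \<Rightarrow> bool) \<Rightarrow> 'a \<Rightarrow> 'a set" where
  "I_past ll x = {y. ll y x}"

definition distinguishing :: "('a \<Rightarrow> 'a \<Rightarrow> bool) \<Rightarrow> bool" where
  "distinguishing ll \<longleftrightarrow> (\<forall>x y. (I_future ll x = I_future ll y \<longrightarrow> x = y) \<and>
                                 (I_past ll x = I_past ll y \<longrightarrow> x = y))"

definition reflective :: "('a \<Rightarrow> 'a \<Rightarrow> bool) \<Rightarrow> bool" where
  "reflective ll \<longleftrightarrow> (\<forall>x y. (I_future ll x \<subseteq> I_future ll y \<longrightarrow> I_past ll y \<subseteq> I_past ll x) \<and>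
                             (I_past ll y \<subseteq> I_past ll x \<longrightarrow> I_future ll x \<subseteq> I_future ll y))"

definition causally_continuous :: "('a \<Rightarrow> 'a \<Rightarrow> bool) \<Rightarrow> bool" where
  "causally_continuous ll \<longleftrightarrow> distinguishing ll \<and> reflective ll"

end

theory Submission
  imports Defs
begin

text \<open>Every point lies in the closure of its chronological future and of its chronological past,
  since it is the endpoint of a timelike curve. If \<open>I\<^sup>+(x) \<subseteq> I\<^sup>+(y)\<close> and \<open>z \<ll> y\<close>, the reverse
  triangle inequality gives \<open>\<tau>(z,y) \<le> \<tau>(z,w)\<close> for every \<open>w \<in> I\<^sup>+(x)\<close>; by continuity of \<open>\<tau>\<close>
  this passes to the limit \<open>w \<rightarrow> x\<close>, so \<open>\<tau>(z,x) \<ge> \<tau>(z,y) > 0\<close>, i.e. \<open>z \<ll> x\<close>. The other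
  half of reflectivity is symmetric.\<close>

lemma fd_curve_start_in_closure:
  assumes "fd_curve R a b \<gamma>"
  shows "\<gamma> a \<in> closure {y. R (\<gamma> a) y}"
proof -
  have ab: "a < b" and R: "\<forall>s\<in>{a..b}. \<forall>t\<in>{a..b}. s < t \<longrightarrow> R (\<gamma> s) (\<gamma> t)"
    and "continuous_on {a..b} \<gamma>"
    using assms lipschitz_on_continuous_on unfolding fd_curve_def by blast+
  then have "(\<gamma> \<longlongrightarrow> \<gamma> a) (at_right a)"
    by (simp add: continuous_on_def flip: at_within_Icc_at_right)
  moreover have "\<forall>\<^sub>F t in at_right a. \<gamma> t \<in> closure {y. R (\<gamma> a) y}"
    using eventually_at_right_real[OF ab]
    by eventually_elim (use R in \<open>auto intro: closure_subset[THEN subsetD]\<close>)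
  ultimately show ?thesis
    using Lim_in_closed_set closed_closure trivial_limit_at_right_real by blast
qed

lemma fd_curve_end_in_closure:
  assumes "fd_curve R a b \<gamma>"
  shows "\<gamma> b \<in> closure {y. R y (\<gamma> b)}"
proof -
  have ab: "a < b" and R: "\<forall>s\<in>{a..b}. \<forall>t\<in>{a..b}. s < t \<longrightarrow> R (\<gamma> s) (\<gamma> t)"
    and "continuous_on {a..b} \<gamma>"
    using assms lipschitz_on_continuous_on unfolding fd_curve_def by blast+
  then have "(\<gamma> \<longlongrightarrow> \<gamma> b) (at_left b)"
    by (simp add: continuous_on_def flip: at_within_Icc_at_left)
  moreover have "\<forall>\<^sub>F t in at_left b. \<gamma> t \<in> closure {y. R y (\<gamma> b)}"
    using eventually_at_left_real[OF ab]
    by eventually_elim (use R in \<open>auto intro: closure_subset[THEN subsetD]\<close>)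
  ultimately show ?thesis
    using Lim_in_closed_set closed_closure trivial_limit_at_left_real by blast
qed

lemma lorentzian_length_space_in_closure_I_future:
  assumes "lorentzian_length_space ll le \<tau>"
  shows "x \<in> closure (I_future ll x)"
proof -
  obtain z where "ll x z"
    using assms unfolding lorentzian_length_space_def localizable_def by metis
  then obtain a b \<gamma> where "fd_curve ll a b \<gamma>" "\<gamma> a = x"
    using assms unfolding lorentzian_length_space_def causally_path_connected_def by blast
  then show ?thesis
    using fd_curve_start_in_closure unfolding I_future_def by blast
qed

lemma lorentzian_length_space_in_closure_I_past:
  assumes "lorentzian_length_space ll le \<tau>"
  shows "x \<in> closure (I_past ll x)"
proof -
  obtain z where "ll z x"
    using assms unfolding lorentzian_length_space_def localizable_def by metis
  then obtain a b \<gamma> where "fd_curve ll a b \<gamma>" "\<gamma> b = x"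
    using assms unfolding lorentzian_length_space_def causally_path_connected_def by blast
  then show ?thesis
    using fd_curve_end_in_closure unfolding I_past_def by blast
qed

lemma lpls_on_UNIV_pos_iff_ll:
  assumes "lpls_on UNIV ll le \<tau>"
  shows "0 < \<tau> x y \<longleftrightarrow> ll x y"
  using assms unfolding lpls_on_def by blast

lemma lpls_on_UNIV_tau_le_right:
  assumes "lpls_on UNIV ll le \<tau>" "ll x y" "ll y z"
  shows "\<tau> x y \<le> \<tau> x z"
proof -
  have "le x y" "le y z"
    using assms unfolding lpls_on_def causal_space_on_def by blast+
  then have "\<tau> x y + \<tau> y z \<le> \<tau> x z"
    using assms(1) unfolding lpls_on_def by blast
  then show ?thesis
    by (meson add_increasing2 order_refl order_trans zero_le)
qed

lemma lpls_on_UNIV_tau_le_left: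
  assumes "lpls_on UNIV ll le \<tau>" "ll x y" "ll y z"
  shows "\<tau> y z \<le> \<tau> x z"
proof -
  have "le x y" "le y z"
    using assms unfolding lpls_on_def causal_space_on_def by blast+
  then have "\<tau> x y + \<tau> y z \<le> \<tau> x z"
    using assms(1) unfolding lpls_on_def by blast
  then show ?thesis
    by (meson add_increasing order_refl order_trans zero_le)
qed

lemma I_past_subset_if_I_future_subset:
  assumes lpls: "lpls_on UNIV ll le \<tau>"
    and cont: "continuous_on UNIV (\<lambda>(x, y). \<tau> x y)"
    and x: "x \<in> closure (I_future ll x)"
    and sub: "I_future ll x \<subseteq> I_future ll y"
  shows "I_past ll y \<subseteq> I_past ll x"
proof
  fix z assume "z \<in> I_past ll y"
  then have zy: "ll z y" by (simp add: I_past_def)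
  have "continuous_on UNIV (\<tau> z)"
    using continuous_on_compose2[OF cont, of UNIV "\<lambda>w. (z, w)"] by (simp add: continuous_on_Pair)
  then have "closed {w. \<tau> z y \<le> \<tau> z w}"
    by (intro closed_Collect_le continuous_on_const)
  moreover have "I_future ll x \<subseteq> {w. \<tau> z y \<le> \<tau> z w}"
    using sub zy lpls_on_UNIV_tau_le_right[OF lpls] by (auto simp: I_future_def)
  ultimately have "\<tau> z y \<le> \<tau> z x"
    using x closure_minimal by blast
  then show "z \<in> I_past ll x"
    using zy lpls_on_UNIV_pos_iff_ll[OF lpls] order_less_le_trans by (metis I_past_def mem_Collect_eq)
qed

lemma I_future_subset_if_I_past_subset:
  assumes lpls: "lpls_on UNIV ll le \<tau>"
    and cont: "continuous_on UNIV (\<lambda>(x, y). \<tau> x y)"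
    and y: "y \<in> closure (I_past ll y)"
    and sub: "I_past ll y \<subseteq> I_past ll x"
  shows "I_future ll x \<subseteq> I_future ll y"
proof
  fix w assume "w \<in> I_future ll x"
  then have xw: "ll x w" by (simp add: I_future_def)
  have "continuous_on UNIV (\<lambda>z. \<tau> z w)"
    using continuous_on_compose2[OF cont, of UNIV "\<lambda>z. (z, w)"] by (simp add: continuous_on_Pair)
  then have "closed {z. \<tau> x w \<le> \<tau> z w}"
    by (intro closed_Collect_le continuous_on_const)
  moreover have "I_past ll y \<subseteq> {z. \<tau> x w \<le> \<tau> z w}"
    using sub xw lpls_on_UNIV_tau_le_left[OF lpls] by (auto simp: I_past_def)
  ultimately have "\<tau> x w \<le> \<tau> y w"
    using y closure_minimal by blast
  then show "w \<in> I_future ll y"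
    using xw lpls_on_UNIV_pos_iff_ll[OF lpls] order_less_le_trans by (metis I_future_def mem_Collect_eq)
qed

theorem proposition3p17:
  fixes ll le :: "'a::metric_space \<Rightarrow> 'a \<Rightarrow> bool" and \<tau> :: "'a \<Rightarrow> 'a \<Rightarrow> ennreal"
  assumes "lorentzian_length_space ll le \<tau>"
    and "distinguishing ll"
    and "continuous_on UNIV (\<lambda>(x, y). \<tau> x y)"
  shows "causally_continuous ll"
proof -
  have lpls: "lpls_on UNIV ll le \<tau>"
    using assms(1) unfolding lorentzian_length_space_def by blast
  have "reflective ll"
    unfolding reflective_def
    using I_past_subset_if_I_future_subset[OF lpls assms(3)]
      I_future_subset_if_I_past_subset[OF lpls assms(3)]
      lorentzian_length_space_in_closure_I_future[OF assms(1)]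
      lorentzian_length_space_in_closure_I_past[OF assms(1)]
    by blast
  with assms(2) show ?thesis
    unfolding causally_continuous_def by blast
qed

end
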